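(* Let $T>0$ and let $f$ be a Lipschitz function on $\mathcal D=[0,1]^2$ with $f(0,0)=f(1,1)=0$. Let $u_N(t,x)=\mathbb{E}(f(x^t)\mid x^0=x)$ for the process $x^t$ described in the context (extended to all $x\in\mathcal D$ by interpolation in space). There exists a constant $C$ depending on the Lipschitz constant $\|f\|_{\mathrm{lip}}$ of $f$ and on $T$, but not on $N$, such that for all $x,y\in\mathcal D$ and $s,t\in[0,T]$, $$|u_N(t,x)-u_N(t,y)|\le C|x-y|,\qquad |u_N(t,x)-u_N(s,x)|\le C|t-s|^{1/2}.$$
   Context: Two patches have hosting capacities $N_1=N$ and $N_2=dN$, with $d=N_2/N_1\in(0,1]$ fixed; $\kappa>0$ fixed, $\delta t=1/N$, $\kappa\delta t\le 1$. Let $M=\begin{pmatrix} d & -d\\ -1 & 1\end{pmatrix}$ and $A=\mathrm{Id}-\frac{\kappa}{N}M$. For a function $g$ on $\mathcal D$ define $$B_N(g)(x)=\sum_{j_1=0}^{N_1}\sum_{j_2=0}^{N_2}\binom{N_1}{j_1}\binom{N_2}{j_2}x_1^{j_1}(1-x_1)^{N_1-j_1}x_2^{j_2}(1-x_2)^{N_2-j_2}\,g\!\left(\tfrac{j_1}{N_1},\tfrac{j_2}{N_2}\right).$$ $(x^n)_{n\ge0}$ is the Markov chain in $\mathcal D$ with transition kernel $\mathbb{E}(f(x^{n+1})\mid x^n=x)=B_N(f\circ A)(x)$, and $x^t$ is the continuous piecewise linear-in-time process with $x^t=x^n$ at $t=n\delta t$. *)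

theory Defs
  imports "HOL-Analysis.Analysis"
begin

definition dom2 :: "(real \<times> real) set" where
  "dom2 = {0..1} \<times> {0..1}"

definition bern_w :: "nat \<Rightarrow> nat \<Rightarrow> real \<times> real \<Rightarrow> nat \<Rightarrow> nat \<Rightarrow> real" where
  "bern_w N1 N2 x j1 j2 =
     real (N1 choose j1) * fst x ^ j1 * (1 - fst x) ^ (N1 - j1) *
     real (N2 choose j2) * snd x ^ j2 * (1 - snd x) ^ (N2 - j2)"

definition bernstein2 :: "nat \<Rightarrow> nat \<Rightarrow> (real \<times> real \<Rightarrow> real) \<Rightarrow> real \<times> real \<Rightarrow> real" where
  "bernstein2 N1 N2 g x =
     (\<Sum>j1\<le>N1. \<Sum>j2\<le>N2. bern_w N1 N2 x j1 j2 * g (real j1 / real N1, real j2 / real N2))"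

text \<open>A = Id - (kappa/N) M with M = [[d,-d],[-1,1]], N = N1.\<close>
definition matA :: "real \<Rightarrow> real \<Rightarrow> nat \<Rightarrow> real \<times> real \<Rightarrow> real \<times> real" where
  "matA d \<kappa> N y =
     (fst y - \<kappa> / real N * (d * fst y - d * snd y),
      snd y - \<kappa> / real N * (- fst y + snd y))"

text \<open>One-step transition operator: E(g(x^{n+1}) | x^n = x) = B_N(g o A)(x).\<close>
definition step_op :: "real \<Rightarrow> real \<Rightarrow> nat \<Rightarrow> nat \<Rightarrow> (real \<times> real \<Rightarrow> real) \<Rightarrow> real \<times> real \<Rightarrow> real" where
  "step_op d \<kappa> N1 N2 g = bernstein2 N1 N2 (g \<circ> matA d \<kappa> N1)"

text \<open>E( g((1-theta) x^n + theta x^{n+1}) | x^n = x ).\<close>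
definition interp_op :: "real \<Rightarrow> real \<Rightarrow> nat \<Rightarrow> nat \<Rightarrow> real \<Rightarrow> (real \<times> real \<Rightarrow> real) \<Rightarrow> real \<times> real \<Rightarrow> real" where
  "interp_op d \<kappa> N1 N2 \<theta> g x =
     (\<Sum>j1\<le>N1. \<Sum>j2\<le>N2. bern_w N1 N2 x j1 j2 *
        g ((1 - \<theta>) *\<^sub>R x + \<theta> *\<^sub>R matA d \<kappa> N1 (real j1 / real N1, real j2 / real N2)))"

text \<open>u_N(t,x) = E(f(x^t) | x^0 = x) for the piecewise linear interpolated chain, delta t = 1/N1:
  with t = (n + theta) delta t, x^t = (1-theta) x^n + theta x^{n+1}.\<close>
definition uN :: "real \<Rightarrow> real \<Rightarrow> nat \<Rightarrow> nat \<Rightarrow> (real \<times> real \<Rightarrow> real) \<Rightarrow> real \<Rightarrow> real \<times> real \<Rightarrow> real" where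
  "uN d \<kappa> N1 N2 f t x =
     (let n = nat \<lfloor>t * real N1\<rfloor>; \<theta> = t * real N1 - real n
      in (step_op d \<kappa> N1 N2 ^^ n) (interp_op d \<kappa> N1 N2 \<theta> f) x)"

end

theory Submission
  imports Defs
begin

(* The one-step operator S g = B_N (g \<circ> A) is a Markov operator.
   In space, Bernstein operators preserve coordinatewise Lipschitz constants, and A does not
   expand the weighted distance |x1 - y1| + d |x2 - y2| because (1, d) M = 0; hence every
   S^n g, and its interpolation within a time step, inherits the Lipschitz constant of f.
   In time, one step raises the second moment E |x^{n+1} - a|^2 by O(1/N) (Bernstein variance
   x (1 - x) / N plus the O(1/N) drift of A), so E |x^m - x^0|^2 = O(m/N) and, by Jensen,
   |S^m g x - g x| = O(sqrt (m/N)); inside one step the interpolation is Lipschitz in the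
   fractional time with constant O(1/sqrt N). Gluing both at the integer times gives the
   square-root modulus in t = (n + \<theta>)/N. *)

section \<open>Markov operators\<close>

definition markov_op :: "'a set \<Rightarrow> (('a \<Rightarrow> real) \<Rightarrow> 'a \<Rightarrow> real) \<Rightarrow> bool" where
  "markov_op D P \<longleftrightarrow>
     (\<forall>g h. P (\<lambda>z. g z + h z) = (\<lambda>x. P g x + P h x)) \<and>
     (\<forall>c g. P (\<lambda>z. c * g z) = (\<lambda>x. c * P g x)) \<and>
     (\<forall>c. P (\<lambda>z. c) = (\<lambda>x. c)) \<and>
     (\<forall>g h. (\<forall>z\<in>D. g z \<le> h z) \<longrightarrow> (\<forall>x\<in>D. P g x \<le> P h x))"

lemma markov_opI:
  assumes "\<And>g h x. P (\<lambda>z. g z + h z) x = P g x + P h x"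
    and "\<And>c g x. P (\<lambda>z. c * g z) x = c * P g x"
    and "\<And>c x. P (\<lambda>z. c) x = c"
    and "\<And>g h x. (\<And>z. z \<in> D \<Longrightarrow> g z \<le> h z) \<Longrightarrow> x \<in> D \<Longrightarrow> P g x \<le> P h x"
  shows "markov_op D P"
  unfolding markov_op_def using assms by (intro conjI allI impI ballI ext) simp_all

lemma markov_op_add: "markov_op D P \<Longrightarrow> P (\<lambda>z. g z + h z) x = P g x + P h x"
  unfolding markov_op_def by metis

lemma markov_op_scale: "markov_op D P \<Longrightarrow> P (\<lambda>z. c * g z) x = c * P g x"
  unfolding markov_op_def by metis

lemma markov_op_const: "markov_op D P \<Longrightarrow> P (\<lambda>z. c) x = c"
  unfolding markov_op_def by metis

lemma markov_op_mono:
  "markov_op D P \<Longrightarrow> (\<And>z. z \<in> D \<Longrightarrow> g z \<le> h z) \<Longrightarrow> x \<in> D \<Longrightarrow> P g x \<le> P h x"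
  unfolding markov_op_def by metis

lemma markov_op_id: "markov_op D id"
  by (rule markov_opI) simp_all

lemma markov_op_comp:
  assumes P: "markov_op D P" and Q: "markov_op D Q"
  shows "markov_op D (P \<circ> Q)"
proof (rule markov_opI)
  fix g h :: "'a \<Rightarrow> real" and c x
  have "Q (\<lambda>z. g z + h z) = (\<lambda>z. Q g z + Q h z)" "Q (\<lambda>z. c * g z) = (\<lambda>z. c * Q g z)"
    "Q (\<lambda>z. c) = (\<lambda>z. c)"
    by (simp_all add: markov_op_add[OF Q] markov_op_scale[OF Q] markov_op_const[OF Q] ext)
  then show "(P \<circ> Q) (\<lambda>z. g z + h z) x = (P \<circ> Q) g x + (P \<circ> Q) h x"
    "(P \<circ> Q) (\<lambda>z. c * g z) x = c * (P \<circ> Q) g x" "(P \<circ> Q) (\<lambda>z. c) x = c"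
    by (simp_all add: markov_op_add[OF P] markov_op_scale[OF P] markov_op_const[OF P])
  assume "\<And>z. z \<in> D \<Longrightarrow> g z \<le> h z" "x \<in> D"
  then show "(P \<circ> Q) g x \<le> (P \<circ> Q) h x"
    using markov_op_mono[OF Q] by (simp add: markov_op_mono[OF P])
qed

lemma markov_op_funpow: "markov_op D P \<Longrightarrow> markov_op D (P ^^ m)"
  by (induction m) (auto simp: markov_op_id markov_op_comp)

lemma markov_op_precompose:
  assumes P: "markov_op D P" and \<phi>: "\<phi> ` D \<subseteq> D"
  shows "markov_op D (\<lambda>g. P (g \<circ> \<phi>))"
proof (rule markov_opI)
  fix g h :: "'a \<Rightarrow> real" and x
  assume "\<And>z. z \<in> D \<Longrightarrow> g z \<le> h z" "x \<in> D"
  then show "P (g \<circ> \<phi>) x \<le> P (h \<circ> \<phi>) x"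
    using \<phi> by (intro markov_op_mono[OF P]) auto
qed (simp_all add: comp_def markov_op_add[OF P] markov_op_scale[OF P] markov_op_const[OF P])

lemma markov_op_minus: "markov_op D P \<Longrightarrow> P (\<lambda>z. - g z) x = - P g x"
  using markov_op_scale[of D P "-1" g x] by simp

lemma markov_op_diff: "markov_op D P \<Longrightarrow> P (\<lambda>z. g z - h z) x = P g x - P h x"
  using markov_op_add[of D P g "\<lambda>z. - h z" x] markov_op_minus[of D P h x] by simp

lemma markov_op_abs_le:
  assumes P: "markov_op D P" and x: "x \<in> D"
  shows "\<bar>P g x\<bar> \<le> P (\<lambda>z. \<bar>g z\<bar>) x"
proof -
  have "P g x \<le> P (\<lambda>z. \<bar>g z\<bar>) x" by (rule markov_op_mono[OF P _ x]) simp
  moreover have "P (\<lambda>z. - \<bar>g z\<bar>) x \<le> P g x" by (rule markov_op_mono[OF P _ x]) simp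
  ultimately show ?thesis by (simp add: markov_op_minus[OF P])
qed

text \<open>Jensen's inequality for the square, from the positivity of \<open>P ((g - P g x)\<^sup>2)\<close> at \<open>x\<close>.\<close>
lemma markov_op_le_sqrt:
  assumes P: "markov_op D P" and x: "x \<in> D"
  shows "P g x \<le> sqrt (P (\<lambda>z. (g z)\<^sup>2) x)"
proof (rule real_le_rsqrt)
  define a where "a = P g x"
  have "0 \<le> P (\<lambda>z. (g z - a)\<^sup>2) x"
    using markov_op_mono[OF P _ x, of "\<lambda>z. 0"] markov_op_const[OF P] by fastforce
  also have "P (\<lambda>z. (g z - a)\<^sup>2) x = P (\<lambda>z. (g z)\<^sup>2 + ((-2 * a) * g z + a\<^sup>2)) x"
    by (simp add: power2_eq_square algebra_simps)
  also have "\<dots> = P (\<lambda>z. (g z)\<^sup>2) x + ((-2 * a) * a + a\<^sup>2)"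
    unfolding markov_op_add[OF P] markov_op_scale[OF P] markov_op_const[OF P] a_def ..
  finally show "(P g x)\<^sup>2 \<le> P (\<lambda>z. (g z)\<^sup>2) x"
    by (simp add: a_def power2_eq_square)
qed

lemma markov_op_funpow_le_add:
  assumes P: "markov_op D P" and step: "\<And>x. x \<in> D \<Longrightarrow> P h x \<le> h x + c"
  shows "x \<in> D \<Longrightarrow> (P ^^ m) h x \<le> h x + real m * c"
proof (induction m arbitrary: x)
  case (Suc m)
  have "(P ^^ Suc m) h x \<le> P (\<lambda>z. h z + real m * c) x"
    using markov_op_mono[OF P Suc.IH Suc.prems] by simp
  also have "\<dots> \<le> h x + real (Suc m) * c"
    using step[OF Suc.prems] by (simp add: markov_op_add[OF P] markov_op_const[OF P] algebra_simps)
  finally show ?case .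
qed simp

lemma markov_op_lipschitz_deviation:
  fixes D :: "'a::metric_space set"
  assumes P: "markov_op D P" and g: "L-lipschitz_on D g" and x: "x \<in> D"
  shows "\<bar>P g x - g x\<bar> \<le> L * sqrt (P (\<lambda>z. (dist z x)\<^sup>2) x)"
proof -
  have "P g x - g x = P (\<lambda>z. g z - g x) x"
    by (simp add: markov_op_diff[OF P] markov_op_const[OF P])
  also have "\<bar>\<dots>\<bar> \<le> P (\<lambda>z. \<bar>g z - g x\<bar>) x"
    by (rule markov_op_abs_le[OF P x])
  also have "\<dots> \<le> P (\<lambda>z. L * dist z x) x"
    using lipschitz_onD[OF g _ x] x by (intro markov_op_mono[OF P]) (auto simp: dist_real_def)
  also have "\<dots> \<le> L * sqrt (P (\<lambda>z. (dist z x)\<^sup>2) x)"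
    using markov_op_le_sqrt[OF P x] lipschitz_on_nonneg[OF g]
    by (simp add: markov_op_scale[OF P] mult_left_mono)
  finally show ?thesis .
qed

section \<open>Bernstein operators\<close>

lemma Bernstein_Suc_Suc:
  "Bernstein (Suc n) (Suc k) x = (1 - x) * Bernstein n (Suc k) x + x * Bernstein n k x"
proof (cases "k < n")
  case True
  then have "Suc n - Suc k = Suc (n - Suc k)" "n - k = Suc (n - Suc k)" by auto
  then show ?thesis unfolding Bernstein_def by (simp add: algebra_simps)
next
  case False
  then show ?thesis unfolding Bernstein_def by (simp add: algebra_simps)
qed

lemma Bernstein_sum_Suc:
  "(\<Sum>k\<le>Suc n. c k * Bernstein (Suc n) k x) =
     (1 - x) * (\<Sum>k\<le>n. c k * Bernstein n k x) + x * (\<Sum>k\<le>n. c (Suc k) * Bernstein n k x)"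
proof -
  have "(\<Sum>k\<le>Suc n. c k * Bernstein (Suc n) k x) =
      c 0 * ((1 - x) * Bernstein n 0 x) + (\<Sum>k\<le>n. c (Suc k) * ((1 - x) * Bernstein n (Suc k) x))
      + (\<Sum>k\<le>n. c (Suc k) * (x * Bernstein n k x))"
    unfolding sum.atMost_Suc_shift Bernstein_Suc_Suc
    by (simp add: Bernstein_def distrib_left sum.distrib)
  also have "c 0 * ((1 - x) * Bernstein n 0 x) + (\<Sum>k\<le>n. c (Suc k) * ((1 - x) * Bernstein n (Suc k) x))
      = (1 - x) * (\<Sum>k\<le>Suc n. c k * Bernstein n k x)"
    unfolding sum.atMost_Suc_shift by (simp add: sum_distrib_left algebra_simps)
  also have "(\<Sum>k\<le>Suc n. c k * Bernstein n k x) = (\<Sum>k\<le>n. c k * Bernstein n k x)"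
    by (simp add: Bernstein_def)
  finally show ?thesis
    by (simp add: sum_distrib_left algebra_simps)
qed

lemma Bernstein_sum_abs_le:
  assumes "0 \<le> x" "x \<le> 1" "\<And>k. k \<le> n \<Longrightarrow> \<bar>c k\<bar> \<le> M"
  shows "\<bar>\<Sum>k\<le>n. c k * Bernstein n k x\<bar> \<le> M"
proof -
  have "\<bar>\<Sum>k\<le>n. c k * Bernstein n k x\<bar> \<le> (\<Sum>k\<le>n. M * Bernstein n k x)"
    using assms by (intro order_trans[OF sum_abs] sum_mono)
      (simp add: abs_mult Bernstein_nonneg mult_right_mono)
  then show ?thesis by (simp add: sum_distrib_left[symmetric])
qed

text \<open>Differencing \<open>Bernstein_sum_Suc\<close> in \<open>x\<close> leaves a convex combination of two
  polynomials of degree \<open>n\<close> plus \<open>(x - y)\<close> times the Bernstein polynomial of the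
  forward differences of \<open>c\<close>.\<close>
lemma Bernstein_sum_lipschitz:
  assumes "\<And>k. k < n \<Longrightarrow> \<bar>c (Suc k) - c k\<bar> \<le> \<delta>"
    and x: "0 \<le> x" "x \<le> 1" and y: "0 \<le> y" "y \<le> 1"
  shows "\<bar>(\<Sum>k\<le>n. c k * Bernstein n k x) - (\<Sum>k\<le>n. c k * Bernstein n k y)\<bar> \<le> real n * \<delta> * \<bar>x - y\<bar>"
  using assms(1)
proof (induction n arbitrary: c)
  case 0
  then show ?case by (simp add: Bernstein_def)
next
  case (Suc n)
  define P where "P z = (\<Sum>k\<le>n. c k * Bernstein n k z)" for z
  define Q where "Q z = (\<Sum>k\<le>n. c (Suc k) * Bernstein n k z)" for z
  have P: "\<bar>P x - P y\<bar> \<le> real n * \<delta> * \<bar>x - y\<bar>"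
    unfolding P_def by (rule Suc.IH) (use Suc.prems in auto)
  have Q: "\<bar>Q x - Q y\<bar> \<le> real n * \<delta> * \<bar>x - y\<bar>"
    unfolding Q_def by (rule Suc.IH) (use Suc.prems in auto)
  have "Q y - P y = (\<Sum>k\<le>n. (c (Suc k) - c k) * Bernstein n k y)"
    unfolding P_def Q_def by (simp add: sum_subtractf[symmetric] algebra_simps)
  also have "\<bar>\<dots>\<bar> \<le> \<delta>"
    by (rule Bernstein_sum_abs_le) (use y Suc.prems in auto)
  finally have QP: "\<bar>Q y - P y\<bar> \<le> \<delta>" .
  have "(\<Sum>k\<le>Suc n. c k * Bernstein (Suc n) k x) - (\<Sum>k\<le>Suc n. c k * Bernstein (Suc n) k y)
      = (1 - x) * (P x - P y) + x * (Q x - Q y) + (x - y) * (Q y - P y)"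
    unfolding Bernstein_sum_Suc P_def Q_def by (simp add: algebra_simps)
  also have "\<bar>\<dots>\<bar> \<le> (1 - x) * \<bar>P x - P y\<bar> + x * \<bar>Q x - Q y\<bar> + \<bar>x - y\<bar> * \<bar>Q y - P y\<bar>"
    using x by (simp add: abs_mult order_trans[OF abs_triangle_ineq add_mono])
  also have "\<dots> \<le> (1 - x) * (real n * \<delta> * \<bar>x - y\<bar>) + x * (real n * \<delta> * \<bar>x - y\<bar>) + \<bar>x - y\<bar> * \<delta>"
    using x P Q QP by (intro add_mono mult_left_mono) auto
  also have "\<dots> = real (Suc n) * \<delta> * \<bar>x - y\<bar>"
    by (simp add: algebra_simps)
  finally show ?case .
qed

lemma Bernstein_second_moment:
  assumes "0 < n"
  shows "(\<Sum>k\<le>n. (real k / real n - a)\<^sup>2 * Bernstein n k x) = (x - a)\<^sup>2 + x * (1 - x) / real n"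
proof -
  have summand: "(real k / real n - a)\<^sup>2 * Bernstein n k x =
     1 / (real n)\<^sup>2 * (real k * (real k - 1) * Bernstein n k x) +
     (1 / (real n)\<^sup>2 - 2 * a / real n) * (real k * Bernstein n k x) + a\<^sup>2 * Bernstein n k x" for k
    using assms by (simp add: power2_eq_square field_simps)
  have "(\<Sum>k\<le>n. (real k / real n - a)\<^sup>2 * Bernstein n k x) =
     1 / (real n)\<^sup>2 * (\<Sum>k\<le>n. real k * (real k - 1) * Bernstein n k x) +
     (1 / (real n)\<^sup>2 - 2 * a / real n) * (\<Sum>k\<le>n. real k * Bernstein n k x) + a\<^sup>2 * (\<Sum>k\<le>n. Bernstein n k x)"
    unfolding summand by (simp only: sum.distrib sum_distrib_left)
  also have "\<dots> = (x - a)\<^sup>2 + x * (1 - x) / real n"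
    unfolding sum_kk_Bernstein sum_k_Bernstein sum_Bernstein
    using assms by (simp add: power2_eq_square field_simps)
  finally show ?thesis .
qed

lemma dom2_iff: "x \<in> dom2 \<longleftrightarrow> fst x \<in> {0..1} \<and> snd x \<in> {0..1}"
  by (cases x) (simp add: dom2_def)

lemma grid_in_dom2: "j1 \<le> N1 \<Longrightarrow> j2 \<le> N2 \<Longrightarrow> (real j1 / real N1, real j2 / real N2) \<in> dom2"
  by (auto simp: dom2_def divide_le_eq_1)

lemma convex_dom2: "convex dom2"
  by (simp add: dom2_def convex_Times)

lemma bern_w_eq_Bernstein: "bern_w N1 N2 x j1 j2 = Bernstein N1 j1 (fst x) * Bernstein N2 j2 (snd x)"
  by (simp add: bern_w_def Bernstein_def)

lemma sum_bern_w: "(\<Sum>j1\<le>N1. \<Sum>j2\<le>N2. bern_w N1 N2 x j1 j2) = 1"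
  by (simp add: bern_w_eq_Bernstein sum_distrib_left[symmetric] sum_distrib_right[symmetric])

lemma bernstein2_iterated:
  "bernstein2 N1 N2 g x = (\<Sum>j2\<le>N2.
     (\<Sum>j1\<le>N1. g (real j1 / real N1, real j2 / real N2) * Bernstein N1 j1 (fst x)) * Bernstein N2 j2 (snd x))"
  unfolding bernstein2_def bern_w_eq_Bernstein
  by (subst sum.swap) (simp add: sum_distrib_left sum_distrib_right algebra_simps)

lemma bernstein2_swap:
  "bernstein2 N1 N2 g x = bernstein2 N2 N1 (\<lambda>z. g (snd z, fst z)) (snd x, fst x)"
  unfolding bernstein2_def bern_w_eq_Bernstein
  by (subst sum.swap) (simp add: algebra_simps)

lemma bernstein2_fst:
  "bernstein2 N1 N2 (\<lambda>z. \<phi> (fst z)) x = (\<Sum>k\<le>N1. \<phi> (real k / real N1) * Bernstein N1 k (fst x))"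
  unfolding bernstein2_def bern_w_eq_Bernstein
  by (simp add: sum_distrib_left[symmetric] sum_distrib_right[symmetric] algebra_simps)

lemma bernstein2_snd:
  "bernstein2 N1 N2 (\<lambda>z. \<phi> (snd z)) x = (\<Sum>k\<le>N2. \<phi> (real k / real N2) * Bernstein N2 k (snd x))"
  by (subst bernstein2_swap) (simp add: bernstein2_fst)

lemma markov_op_bernstein2: "markov_op dom2 (bernstein2 N1 N2)"
proof (rule markov_opI)
  fix g h :: "real \<times> real \<Rightarrow> real" and x
  assume gh: "\<And>z. z \<in> dom2 \<Longrightarrow> g z \<le> h z" and x: "x \<in> dom2"
  then have "0 \<le> Bernstein N1 j1 (fst x) * Bernstein N2 j2 (snd x)" for j1 j2
    by (simp add: dom2_iff Bernstein_nonneg)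
  then show "bernstein2 N1 N2 g x \<le> bernstein2 N1 N2 h x"
    unfolding bernstein2_def bern_w_eq_Bernstein
    by (intro sum_mono mult_left_mono) (simp_all add: gh grid_in_dom2)
next
  show "bernstein2 N1 N2 (\<lambda>z. c) x = c" for c x
    by (simp add: bernstein2_def sum_distrib_right[symmetric] sum_bern_w)
qed (simp_all add: bernstein2_def sum.distrib distrib_left sum_distrib_left algebra_simps)

lemma dist_sq_pair: "(dist z a)\<^sup>2 = (fst z - fst a)\<^sup>2 + (snd z - snd a)\<^sup>2" for z a :: "real \<times> real"
  by (simp add: dist_prod_def dist_real_def)

lemma bernstein2_second_moment:
  assumes "0 < N1" "0 < N2" "x \<in> dom2"
  shows "bernstein2 N1 N2 (\<lambda>z. (dist z a)\<^sup>2) x \<le> (dist x a)\<^sup>2 + 1 / real N1 + 1 / real N2"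
proof -
  have var: "t * (1 - t) / real n \<le> 1 / real n" if "t \<in> {0..1}" for t :: real and n
  proof -
    have "t * (1 - t) \<le> 1 * 1" using that by (intro mult_mono) auto
    then show ?thesis by (simp add: divide_right_mono)
  qed
  have "bernstein2 N1 N2 (\<lambda>z. (dist z a)\<^sup>2) x
      = (fst x - fst a)\<^sup>2 + fst x * (1 - fst x) / real N1 + ((snd x - snd a)\<^sup>2 + snd x * (1 - snd x) / real N2)"
    using assms
    by (simp add: dist_sq_pair markov_op_add[OF markov_op_bernstein2] Bernstein_second_moment
        bernstein2_fst[of N1 N2 "\<lambda>t. (t - fst a)\<^sup>2"] bernstein2_snd[of N1 N2 "\<lambda>t. (t - snd a)\<^sup>2"])
  also have "\<dots> \<le> (dist x a)\<^sup>2 + 1 / real N1 + 1 / real N2"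
    using var[of "fst x" N1] var[of "snd x" N2] assms by (simp add: dist_sq_pair dom2_iff)
  finally show ?thesis .
qed

lemma bernstein2_lipschitz_fst:
  assumes g: "\<And>a a' b. (a, b) \<in> dom2 \<Longrightarrow> (a', b) \<in> dom2 \<Longrightarrow> \<bar>g (a, b) - g (a', b)\<bar> \<le> K * \<bar>a - a'\<bar>"
    and N1: "0 < N1" and x: "(x1, x2) \<in> dom2" and y: "(y1, x2) \<in> dom2"
  shows "\<bar>bernstein2 N1 N2 g (x1, x2) - bernstein2 N1 N2 g (y1, x2)\<bar> \<le> K * \<bar>x1 - y1\<bar>"
proof -
  define p where "p j2 t = (\<Sum>j1\<le>N1. g (real j1 / real N1, real j2 / real N2) * Bernstein N1 j1 t)" for j2 t
  have "bernstein2 N1 N2 g (x1, x2) - bernstein2 N1 N2 g (y1, x2) =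
      (\<Sum>j2\<le>N2. (p j2 x1 - p j2 y1) * Bernstein N2 j2 x2)"
    unfolding bernstein2_iterated p_def by (simp add: sum_subtractf left_diff_distrib)
  also have "\<bar>\<dots>\<bar> \<le> K * \<bar>x1 - y1\<bar>"
  proof (rule Bernstein_sum_abs_le)
    fix j2 assume j2: "j2 \<le> N2"
    have "\<bar>g (real (Suc k) / real N1, real j2 / real N2) - g (real k / real N1, real j2 / real N2)\<bar>
        \<le> K / real N1" if "k < N1" for k
    proof -
      have "(real (Suc k) / real N1, real j2 / real N2) \<in> dom2" "(real k / real N1, real j2 / real N2) \<in> dom2"
        using that j2 by (intro grid_in_dom2; simp)+
      from g[OF this] show ?thesis
        using N1 by (simp add: diff_divide_distrib[symmetric])
    qed
    then have "\<bar>p j2 x1 - p j2 y1\<bar> \<le> real N1 * (K / real N1) * \<bar>x1 - y1\<bar>"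
      unfolding p_def using x y by (intro Bernstein_sum_lipschitz) (auto simp: dom2_def)
    then show "\<bar>p j2 x1 - p j2 y1\<bar> \<le> K * \<bar>x1 - y1\<bar>"
      using N1 by simp
  qed (use x in \<open>auto simp: dom2_def\<close>)
  finally show ?thesis .
qed

lemma bernstein2_lipschitz_snd:
  assumes g: "\<And>a b b'. (a, b) \<in> dom2 \<Longrightarrow> (a, b') \<in> dom2 \<Longrightarrow> \<bar>g (a, b) - g (a, b')\<bar> \<le> K * \<bar>b - b'\<bar>"
    and N2: "0 < N2" and x: "(x1, x2) \<in> dom2" and y: "(x1, y2) \<in> dom2"
  shows "\<bar>bernstein2 N1 N2 g (x1, x2) - bernstein2 N1 N2 g (x1, y2)\<bar> \<le> K * \<bar>x2 - y2\<bar>"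
  using bernstein2_lipschitz_fst[of "\<lambda>z. g (snd z, fst z)" K N2 x2 x1 y2 N1] assms
  by (simp add: bernstein2_swap[of N1 N2 g] dom2_def)

section \<open>Elementary estimates and gluing in time\<close>

lemma abs_convex_comb_le:
  fixes u v t :: real
  assumes "0 \<le> t" "t \<le> 1"
  shows "\<bar>(1 - t) * u + t * v\<bar> \<le> (1 - t) * \<bar>u\<bar> + t * \<bar>v\<bar>"
  using abs_triangle_ineq[of "(1 - t) * u" "t * v"] assms by (simp add: abs_mult)

lemma convex_comb_sq_le:
  fixes e u v a :: real
  assumes e: "0 \<le> e" "e \<le> 1" and "u \<in> {0..1}" "v \<in> {0..1}" "a \<in> {0..1}"
  shows "((1 - e) * u + e * v - a)\<^sup>2 \<le> (u - a)\<^sup>2 + e"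
proof -
  have "((1 - e) * u + e * v - a)\<^sup>2 = (1 - e) * (u - a)\<^sup>2 + e * (v - a)\<^sup>2 - e * (1 - e) * (u - v)\<^sup>2"
    by (simp add: power2_eq_square algebra_simps)
  also have "\<dots> \<le> (1 - e) * (u - a)\<^sup>2 + e * (v - a)\<^sup>2"
    using e by simp
  also have "\<dots> \<le> (u - a)\<^sup>2 + e * 1"
  proof -
    have "\<bar>v - a\<bar> \<le> 1" using assms by auto
    then have "(v - a)\<^sup>2 \<le> 1" by (simp add: abs_square_le_1)
    then show ?thesis using e by (intro add_mono mult_left_mono) (auto simp: mult_left_le_one_le)
  qed
  finally show ?thesis by simp
qed

lemma convex_comb_in_unit_interval:
  fixes e u v :: real
  assumes "0 \<le> e" "e \<le> 1" "u \<in> {0..1}" "v \<in> {0..1}"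
  shows "(1 - e) * u + e * v \<in> {0..1}"
  using convexD[of "{0..1::real}" u v "1 - e" e] assms by simp

lemma dist_convex_comb_param:
  fixes z q :: "'a::real_normed_vector"
  shows "dist ((1 - s) *\<^sub>R z + s *\<^sub>R q) ((1 - t) *\<^sub>R z + t *\<^sub>R q) = \<bar>s - t\<bar> * dist q z"
proof -
  have "(1 - s) *\<^sub>R z + s *\<^sub>R q - ((1 - t) *\<^sub>R z + t *\<^sub>R q) = (s - t) *\<^sub>R (q - z)"
    by (simp add: algebra_simps)
  then show ?thesis by (simp add: dist_norm)
qed

lemma le_sqrt_if_le_one:
  fixes u h :: real
  assumes "0 \<le> u" "u \<le> 1" "u \<le> h"
  shows "u \<le> sqrt h"
proof (rule real_le_rsqrt)
  have "u * u \<le> 1 * u" using assms by (intro mult_right_mono)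
  then show "u\<^sup>2 \<le> h" using assms by (simp add: power2_eq_square)
qed

lemma nat_floor_frac_bounds:
  fixes s :: real
  assumes "0 \<le> s"
  shows "0 \<le> s - real (nat \<lfloor>s\<rfloor>)" "s - real (nat \<lfloor>s\<rfloor>) < 1"
  using assms frac_ge_0[of s] frac_lt_1[of s] by (simp_all add: frac_def)

text \<open>A function of continuous time \<open>\<tau> = n + \<theta>\<close> that is Lipschitz inside each unit interval and
  \<open>1/2\<close>-Holder at the integer times is \<open>1/2\<close>-Holder: on a long interval the Lipschitz pieces only
  occur at the two ends, where their length is at most \<open>1\<close>.\<close>
lemma interpolation_sqrt_modulus_ordered:
  fixes V :: "nat \<Rightarrow> real \<Rightarrow> real"
  assumes glue: "\<And>n. V n 1 = V (Suc n) 0"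
    and within: "\<And>n \<theta> \<theta>'. \<theta> \<in> {0..1} \<Longrightarrow> \<theta>' \<in> {0..1} \<Longrightarrow> \<bar>V n \<theta> - V n \<theta>'\<bar> \<le> a * \<bar>\<theta> - \<theta>'\<bar>"
    and across: "\<And>n m. \<bar>V (n + m) 0 - V n 0\<bar> \<le> b * sqrt (real m)"
    and s: "0 \<le> s" "s \<le> s'"
  shows "\<bar>V (nat \<lfloor>s'\<rfloor>) (s' - real (nat \<lfloor>s'\<rfloor>)) - V (nat \<lfloor>s\<rfloor>) (s - real (nat \<lfloor>s\<rfloor>))\<bar>
    \<le> (2 * a + b) * sqrt (s' - s)"
proof -
  have a: "0 \<le> a" using order_trans[OF abs_ge_zero within[of 0 1 0]] by simp
  have b: "0 \<le> b" using order_trans[OF abs_ge_zero across[of 0 1]] by simp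
  define n n' where "n = nat \<lfloor>s\<rfloor>" and "n' = nat \<lfloor>s'\<rfloor>"
  define \<theta> \<theta>' where "\<theta> = s - real n" and "\<theta>' = s' - real n'"
  have \<theta>: "0 \<le> \<theta>" "\<theta> < 1" and \<theta>': "0 \<le> \<theta>'" "\<theta>' < 1"
    using nat_floor_frac_bounds[of s] nat_floor_frac_bounds[of s'] s
    by (simp_all add: \<theta>_def \<theta>'_def n_def n'_def)
  have "n \<le> n'" unfolding n_def n'_def using s by (intro nat_mono floor_mono)
  then consider "n' = n" | "Suc n \<le> n'" by linarith
  then have "\<bar>V n' \<theta>' - V n \<theta>\<bar> \<le> (2 * a + b) * sqrt (s' - s)"
  proof cases
    case 1
    have "\<bar>V n \<theta>' - V n \<theta>\<bar> \<le> a * (s' - s)"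
      using within[of \<theta>' \<theta> n] \<theta> \<theta>' 1 s by (simp add: \<theta>_def \<theta>'_def)
    also have "\<dots> \<le> a * sqrt (s' - s)"
      using \<theta> \<theta>' 1 s a by (intro mult_left_mono le_sqrt_if_le_one) (simp_all add: \<theta>_def \<theta>'_def)
    also have "\<dots> \<le> (2 * a + b) * sqrt (s' - s)"
      using a b s by (intro mult_right_mono) auto
    finally show ?thesis using 1 by simp
  next
    case 2
    define m where "m = n' - Suc n"
    have n': "n' = Suc n + m" using 2 by (simp add: m_def)
    have split: "s' - s = \<theta>' + real m + (1 - \<theta>)"
      using n' by (simp add: \<theta>_def \<theta>'_def)
    have "\<bar>V n' \<theta>' - V n \<theta>\<bar>
        \<le> \<bar>V n' \<theta>' - V n' 0\<bar> + \<bar>V (Suc n + m) 0 - V (Suc n) 0\<bar> + \<bar>V n 1 - V n \<theta>\<bar>"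
      unfolding n'[symmetric] glue by linarith
    also have "\<dots> \<le> a * \<theta>' + b * sqrt (real m) + a * (1 - \<theta>)"
      using within[of \<theta>' 0 n'] across[of "Suc n" m] within[of 1 \<theta> n] \<theta> \<theta>'
      by (intro add_mono) simp_all
    also have "\<dots> \<le> a * sqrt (s' - s) + b * sqrt (s' - s) + a * sqrt (s' - s)"
      using a b \<theta> \<theta>' split
      by (intro add_mono mult_left_mono le_sqrt_if_le_one real_sqrt_le_mono) simp_all
    finally show ?thesis by (simp add: algebra_simps)
  qed
  then show ?thesis by (simp add: n_def n'_def \<theta>_def \<theta>'_def)
qed

lemma interpolation_sqrt_modulus:
  fixes V :: "nat \<Rightarrow> real \<Rightarrow> real"
  assumes glue: "\<And>n. V n 1 = V (Suc n) 0"
    and within: "\<And>n \<theta> \<theta>'. \<theta> \<in> {0..1} \<Longrightarrow> \<theta>' \<in> {0..1} \<Longrightarrow> \<bar>V n \<theta> - V n \<theta>'\<bar> \<le> a * \<bar>\<theta> - \<theta>'\<bar>"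
    and across: "\<And>n m. \<bar>V (n + m) 0 - V n 0\<bar> \<le> b * sqrt (real m)"
    and "0 \<le> \<tau>" "0 \<le> \<tau>'"
  shows "\<bar>V (nat \<lfloor>\<tau>'\<rfloor>) (\<tau>' - real (nat \<lfloor>\<tau>'\<rfloor>)) - V (nat \<lfloor>\<tau>\<rfloor>) (\<tau> - real (nat \<lfloor>\<tau>\<rfloor>))\<bar>
    \<le> (2 * a + b) * sqrt \<bar>\<tau>' - \<tau>\<bar>"
proof (cases "\<tau> \<le> \<tau>'")
  case True
  then show ?thesis
    using interpolation_sqrt_modulus_ordered[OF glue within across, of \<tau> \<tau>'] assms by simp
next
  case False
  then show ?thesis
    using interpolation_sqrt_modulus_ordered[OF glue within across, of \<tau>' \<tau>] assms
    by (simp add: abs_minus_commute)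
qed

section \<open>Weighted Lipschitz functions\<close>

definition wdist :: "real \<Rightarrow> real \<times> real \<Rightarrow> real \<times> real \<Rightarrow> real" where
  "wdist d a b = \<bar>fst a - fst b\<bar> + d * \<bar>snd a - snd b\<bar>"

definition weighted_lipschitz :: "real \<Rightarrow> real \<Rightarrow> (real \<times> real \<Rightarrow> real) \<Rightarrow> bool" where
  "weighted_lipschitz d K g \<longleftrightarrow> 0 \<le> K \<and> (\<forall>a\<in>dom2. \<forall>b\<in>dom2. \<bar>g a - g b\<bar> \<le> K * wdist d a b)"

lemma weighted_lipschitzI:
  "0 \<le> K \<Longrightarrow> (\<And>a b. a \<in> dom2 \<Longrightarrow> b \<in> dom2 \<Longrightarrow> \<bar>g a - g b\<bar> \<le> K * wdist d a b) \<Longrightarrow>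
    weighted_lipschitz d K g"
  by (simp add: weighted_lipschitz_def)

lemma weighted_lipschitzD:
  "weighted_lipschitz d K g \<Longrightarrow> a \<in> dom2 \<Longrightarrow> b \<in> dom2 \<Longrightarrow> \<bar>g a - g b\<bar> \<le> K * wdist d a b"
  by (simp add: weighted_lipschitz_def)

lemma weighted_lipschitz_nonneg: "weighted_lipschitz d K g \<Longrightarrow> 0 \<le> K"
  by (simp add: weighted_lipschitz_def)

lemma wdist_convex_comb:
  assumes "0 \<le> d" "0 \<le> t" "t \<le> 1"
  shows "wdist d ((1 - t) *\<^sub>R x + t *\<^sub>R p) ((1 - t) *\<^sub>R y + t *\<^sub>R q) \<le> (1 - t) * wdist d x y + t * wdist d p q"
proof -
  have "wdist d ((1 - t) *\<^sub>R x + t *\<^sub>R p) ((1 - t) *\<^sub>R y + t *\<^sub>R q)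
      = \<bar>(1 - t) * (fst x - fst y) + t * (fst p - fst q)\<bar> + d * \<bar>(1 - t) * (snd x - snd y) + t * (snd p - snd q)\<bar>"
    by (simp add: wdist_def algebra_simps)
  also have "\<dots> \<le> ((1 - t) * \<bar>fst x - fst y\<bar> + t * \<bar>fst p - fst q\<bar>) +
      d * ((1 - t) * \<bar>snd x - snd y\<bar> + t * \<bar>snd p - snd q\<bar>)"
    using assms by (intro add_mono mult_left_mono abs_convex_comb_le) auto
  also have "\<dots> = (1 - t) * wdist d x y + t * wdist d p q"
    by (simp add: wdist_def algebra_simps)
  finally show ?thesis .
qed

lemma dist_le_wdist:
  assumes "0 \<le> d" "d \<le> 1"
  shows "d * dist a b \<le> wdist d a b"
proof -
  have "dist a b \<le> \<bar>fst a - fst b\<bar> + \<bar>snd a - snd b\<bar>"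
    by (simp add: dist_prod_def dist_real_def sqrt_sum_squares_le_sum_abs)
  then have "d * dist a b \<le> d * \<bar>fst a - fst b\<bar> + d * \<bar>snd a - snd b\<bar>"
    using assms by (simp add: distrib_left[symmetric] mult_left_mono)
  also have "\<dots> \<le> wdist d a b"
    using assms by (simp add: wdist_def mult_left_le_one_le)
  finally show ?thesis .
qed

lemma wdist_le_dist: "0 \<le> d \<Longrightarrow> wdist d a b \<le> (1 + d) * dist a b"
  using dist_fst_le[of a b] dist_snd_le[of a b]
  by (simp add: wdist_def dist_real_def distrib_right add_mono mult_left_mono)

lemma weighted_lipschitz_bernstein2:
  assumes g: "weighted_lipschitz d K g" and "0 \<le> d" "0 < N1" "0 < N2"
  shows "weighted_lipschitz d K (bernstein2 N1 N2 g)"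
proof (rule weighted_lipschitzI)
  show "0 \<le> K" using g by (rule weighted_lipschitz_nonneg)
  fix x y assume "x \<in> dom2" "y \<in> dom2"
  moreover obtain x1 x2 y1 y2 where xy: "x = (x1, x2)" "y = (y1, y2)" by fastforce
  ultimately have dom: "(x1, x2) \<in> dom2" "(y1, x2) \<in> dom2" "(y1, y2) \<in> dom2"
    by (auto simp: dom2_def)
  have "\<bar>g (a, b) - g (a', b)\<bar> \<le> K * \<bar>a - a'\<bar>" if "(a, b) \<in> dom2" "(a', b) \<in> dom2" for a a' b
    using weighted_lipschitzD[OF g that] by (simp add: wdist_def)
  then have "\<bar>bernstein2 N1 N2 g (x1, x2) - bernstein2 N1 N2 g (y1, x2)\<bar> \<le> K * \<bar>x1 - y1\<bar>"
    using dom assms by (intro bernstein2_lipschitz_fst)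
  moreover have "\<bar>g (a, b) - g (a, b')\<bar> \<le> (K * d) * \<bar>b - b'\<bar>" if "(a, b) \<in> dom2" "(a, b') \<in> dom2" for a b b'
    using weighted_lipschitzD[OF g that] by (simp add: wdist_def)
  then have "\<bar>bernstein2 N1 N2 g (y1, x2) - bernstein2 N1 N2 g (y1, y2)\<bar> \<le> (K * d) * \<bar>x2 - y2\<bar>"
    using dom assms by (intro bernstein2_lipschitz_snd)
  ultimately show "\<bar>bernstein2 N1 N2 g x - bernstein2 N1 N2 g y\<bar> \<le> K * wdist d x y"
    unfolding xy wdist_def by (simp add: algebra_simps)
qed

lemma lipschitz_imp_weighted_lipschitz:
  assumes f: "L-lipschitz_on dom2 f" and d: "0 < d" "d \<le> 1"
  shows "weighted_lipschitz d (L / d) f"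
proof (rule weighted_lipschitzI)
  have L: "0 \<le> L" using f by (rule lipschitz_on_nonneg)
  then show "0 \<le> L / d" using d by simp
  fix a b assume "a \<in> dom2" "b \<in> dom2"
  then have "\<bar>f a - f b\<bar> \<le> L * dist a b"
    using lipschitz_onD[OF f] by (simp add: dist_real_def)
  also have "\<dots> \<le> L / d * wdist d a b"
    using dist_le_wdist[of d a b] d L by (simp add: field_simps mult_left_mono)
  finally show "\<bar>f a - f b\<bar> \<le> L / d * wdist d a b" .
qed

lemma weighted_lipschitz_imp_lipschitz:
  assumes g: "weighted_lipschitz d K g" and "0 \<le> d"
  shows "(K * (1 + d))-lipschitz_on dom2 g"
proof (rule lipschitz_onI)
  fix a b assume "a \<in> dom2" "b \<in> dom2"
  then have "\<bar>g a - g b\<bar> \<le> K * wdist d a b" by (rule weighted_lipschitzD[OF g])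
  also have "\<dots> \<le> K * ((1 + d) * dist a b)"
    using wdist_le_dist[OF \<open>0 \<le> d\<close>] weighted_lipschitz_nonneg[OF g] by (rule mult_left_mono)
  finally show "dist (g a) (g b) \<le> K * (1 + d) * dist a b"
    by (simp add: dist_real_def mult.assoc)
qed (use assms weighted_lipschitz_nonneg in auto)

section \<open>The two-patch chain\<close>

text \<open>Growth rate of the second moment per unit of time: the Bernstein variances \<open>1/N1 + 1/N2\<close>
  with \<open>N2 = d N1\<close>, plus the displacement \<open>(1 + d) \<kappa> / N1\<close> caused by \<open>A\<close>.\<close>
definition var_rate :: "real \<Rightarrow> real \<Rightarrow> real" where
  "var_rate d \<kappa> = 1 + 1 / d + (1 + d) * \<kappa>"

locale two_patch_chain =
  fixes d \<kappa> :: real and N1 N2 :: nat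
  assumes d_pos: "0 < d" and d_le_1: "d \<le> 1" and kappa_pos: "0 < \<kappa>"
    and N1_pos: "0 < N1" and N2_eq: "real N2 = d * real N1" and kappa_le: "\<kappa> / real N1 \<le> 1"
begin

abbreviation "A \<equiv> matA d \<kappa> N1"
abbreviation "S \<equiv> step_op d \<kappa> N1 N2"
abbreviation "I \<equiv> interp_op d \<kappa> N1 N2"

definition \<epsilon> :: real where "\<epsilon> = \<kappa> / real N1"

lemma N2_pos: "0 < N2"
  using N2_eq d_pos N1_pos by (metis of_nat_0_less_iff zero_less_mult_iff)

lemma eps_bounds: "0 \<le> \<epsilon>" "\<epsilon> \<le> 1" "0 \<le> d * \<epsilon>" "d * \<epsilon> \<le> 1"
proof -
  show "0 \<le> \<epsilon>" "\<epsilon> \<le> 1" using kappa_pos kappa_le by (simp_all add: \<epsilon>_def)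
  then show "0 \<le> d * \<epsilon>" "d * \<epsilon> \<le> 1" using d_pos d_le_1 mult_mono[of d 1 \<epsilon> 1] by simp_all
qed

lemma matA_fst: "fst (A y) = (1 - d * \<epsilon>) * fst y + d * \<epsilon> * snd y"
  by (simp add: matA_def \<epsilon>_def algebra_simps)

lemma matA_snd: "snd (A y) = (1 - \<epsilon>) * snd y + \<epsilon> * fst y"
  by (simp add: matA_def \<epsilon>_def algebra_simps)

lemma matA_dom2:
  assumes "y \<in> dom2"
  shows "A y \<in> dom2"
proof -
  have "fst (A y) \<in> {0..1}" "snd (A y) \<in> {0..1}"
    unfolding matA_fst matA_snd using eps_bounds assms
    by (intro convex_comb_in_unit_interval; simp add: dom2_iff)+
  then show ?thesis by (simp add: dom2_iff)
qed

text \<open>\<open>(1, d)\<close> is a left null vector of \<open>M\<close>: the mass \<open>d \<epsilon>\<close> that \<open>A\<close> moves out of the first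
  coordinate is exactly compensated, in \<open>wdist\<close>, by the weight \<open>d\<close> of the mass \<open>\<epsilon>\<close> moved out
  of the second.\<close>
lemma wdist_matA_le: "wdist d (A a) (A b) \<le> wdist d a b"
proof -
  define u v where "u = fst a - fst b" and "v = snd a - snd b"
  have "wdist d (A a) (A b) = \<bar>(1 - d * \<epsilon>) * u + d * \<epsilon> * v\<bar> + d * \<bar>(1 - \<epsilon>) * v + \<epsilon> * u\<bar>"
    by (simp add: wdist_def matA_fst matA_snd u_def v_def algebra_simps)
  also have "\<dots> \<le> ((1 - d * \<epsilon>) * \<bar>u\<bar> + d * \<epsilon> * \<bar>v\<bar>) + d * ((1 - \<epsilon>) * \<bar>v\<bar> + \<epsilon> * \<bar>u\<bar>)"
    using eps_bounds d_pos by (intro add_mono mult_left_mono abs_convex_comb_le) auto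
  also have "\<dots> = wdist d a b"
    by (simp add: wdist_def u_def v_def algebra_simps)
  finally show ?thesis .
qed

lemma dist_matA_sq_le:
  assumes "z \<in> dom2" "a \<in> dom2"
  shows "(dist (A z) a)\<^sup>2 \<le> (dist z a)\<^sup>2 + (1 + d) * \<epsilon>"
proof -
  have "(fst (A z) - fst a)\<^sup>2 \<le> (fst z - fst a)\<^sup>2 + d * \<epsilon>"
    unfolding matA_fst using eps_bounds assms by (intro convex_comb_sq_le) (auto simp: dom2_iff)
  moreover have "(snd (A z) - snd a)\<^sup>2 \<le> (snd z - snd a)\<^sup>2 + \<epsilon>"
    unfolding matA_snd using eps_bounds assms by (intro convex_comb_sq_le) (auto simp: dom2_iff)
  ultimately show ?thesis
    unfolding dist_sq_pair distrib_right by linarith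
qed

lemma step_op_eq: "S g = bernstein2 N1 N2 (g \<circ> A)"
  by (simp add: step_op_def)

lemma markov_op_S: "markov_op dom2 S"
proof -
  have "S = (\<lambda>g. bernstein2 N1 N2 (g \<circ> A))" by (rule ext) (rule step_op_eq)
  then show ?thesis
    using markov_op_precompose[OF markov_op_bernstein2 image_subsetI[OF matA_dom2]] by simp
qed

lemma S_second_moment:
  assumes x: "x \<in> dom2" and a: "a \<in> dom2"
  shows "S (\<lambda>z. (dist z a)\<^sup>2) x \<le> (dist x a)\<^sup>2 + var_rate d \<kappa> / real N1"
proof -
  have B: "markov_op dom2 (bernstein2 N1 N2)" by (rule markov_op_bernstein2)
  have "S (\<lambda>z. (dist z a)\<^sup>2) x \<le> bernstein2 N1 N2 (\<lambda>v. (dist v a)\<^sup>2 + (1 + d) * \<epsilon>) x"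
    unfolding step_op_eq comp_def using dist_matA_sq_le a x by (intro markov_op_mono[OF B])
  also have "\<dots> = bernstein2 N1 N2 (\<lambda>v. (dist v a)\<^sup>2) x + (1 + d) * \<epsilon>"
    by (simp add: markov_op_add[OF B] markov_op_const[OF B])
  also have "\<dots> \<le> (dist x a)\<^sup>2 + 1 / real N1 + 1 / real N2 + (1 + d) * \<epsilon>"
    using bernstein2_second_moment[OF N1_pos N2_pos x] by simp
  also have "\<dots> = (dist x a)\<^sup>2 + var_rate d \<kappa> / real N1"
    using d_pos N1_pos by (simp add: N2_eq var_rate_def \<epsilon>_def field_simps)
  finally show ?thesis .
qed

lemma S_first_moment: "x \<in> dom2 \<Longrightarrow> S (\<lambda>z. dist z x) x \<le> sqrt (var_rate d \<kappa> / real N1)"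
  using markov_op_le_sqrt[OF markov_op_S, of x "\<lambda>z. dist z x"] S_second_moment[of x x]
  by (simp add: order_trans)

lemma S_funpow_second_moment:
  "x \<in> dom2 \<Longrightarrow> (S ^^ m) (\<lambda>z. (dist z x)\<^sup>2) x \<le> real m * (var_rate d \<kappa> / real N1)"
  using markov_op_funpow_le_add[OF markov_op_S S_second_moment, of x x m] by simp

lemma S_funpow_lipschitz_deviation:
  assumes g: "K-lipschitz_on dom2 g" and x: "x \<in> dom2"
  shows "\<bar>(S ^^ m) g x - g x\<bar> \<le> K * sqrt (var_rate d \<kappa> / real N1) * sqrt (real m)"
proof -
  have "\<bar>(S ^^ m) g x - g x\<bar> \<le> K * sqrt ((S ^^ m) (\<lambda>z. (dist z x)\<^sup>2) x)"
    by (rule markov_op_lipschitz_deviation[OF markov_op_funpow[OF markov_op_S] g x])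
  also have "\<dots> \<le> K * sqrt (real m * (var_rate d \<kappa> / real N1))"
    using S_funpow_second_moment[OF x] lipschitz_on_nonneg[OF g] by (simp add: mult_left_mono)
  also have "\<dots> = K * sqrt (var_rate d \<kappa> / real N1) * sqrt (real m)"
    by (subst real_sqrt_mult) (simp add: mult_ac)
  finally show ?thesis .
qed

lemma weighted_lipschitz_S:
  assumes g: "weighted_lipschitz d K g"
  shows "weighted_lipschitz d K (S g)"
proof -
  have "weighted_lipschitz d K (g \<circ> A)"
  proof (rule weighted_lipschitzI)
    show K: "0 \<le> K" using g by (rule weighted_lipschitz_nonneg)
    fix a b assume "a \<in> dom2" "b \<in> dom2"
    then have "\<bar>g (A a) - g (A b)\<bar> \<le> K * wdist d (A a) (A b)"
      by (intro weighted_lipschitzD[OF g] matA_dom2)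
    also have "\<dots> \<le> K * wdist d a b"
      using K wdist_matA_le by (rule mult_left_mono[rotated])
    finally show "\<bar>(g \<circ> A) a - (g \<circ> A) b\<bar> \<le> K * wdist d a b" by simp
  qed
  then show ?thesis
    unfolding step_op_eq using d_pos N1_pos N2_pos by (intro weighted_lipschitz_bernstein2) auto
qed

lemma weighted_lipschitz_S_funpow: "weighted_lipschitz d K g \<Longrightarrow> weighted_lipschitz d K ((S ^^ n) g)"
  by (induction n) (simp_all add: weighted_lipschitz_S)

lemma interp_op_eq_bernstein2: "I \<theta> g x = bernstein2 N1 N2 (\<lambda>v. g ((1 - \<theta>) *\<^sub>R x + \<theta> *\<^sub>R A v)) x"
  by (simp add: interp_op_def bernstein2_def)

lemma interp_op_0: "I 0 g = g"
  by (rule ext) (simp add: interp_op_eq_bernstein2 markov_op_const[OF markov_op_bernstein2])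

lemma interp_op_1: "I 1 g = S g"
  by (rule ext) (simp add: interp_op_eq_bernstein2 step_op_eq comp_def)

lemma interp_point_dom2: "x \<in> dom2 \<Longrightarrow> v \<in> dom2 \<Longrightarrow> \<theta> \<in> {0..1} \<Longrightarrow> (1 - \<theta>) *\<^sub>R x + \<theta> *\<^sub>R A v \<in> dom2"
  using convexD[OF convex_dom2, of x "A v" "1 - \<theta>" \<theta>] matA_dom2 by simp

lemma wdist_interp_point_le:
  assumes "\<theta> \<in> {0..1}"
  shows "wdist d ((1 - \<theta>) *\<^sub>R z + \<theta> *\<^sub>R A v) ((1 - \<theta>) *\<^sub>R z' + \<theta> *\<^sub>R A v')
    \<le> (1 - \<theta>) * wdist d z z' + \<theta> * wdist d v v'"
proof -
  have "\<theta> * wdist d (A v) (A v') \<le> \<theta> * wdist d v v'"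
    using assms wdist_matA_le by (intro mult_left_mono) auto
  then show ?thesis
    using wdist_convex_comb[of d \<theta> z "A v" z' "A v'"] d_pos assms by simp
qed

lemma interp_op_lipschitz_param:
  assumes f: "L-lipschitz_on dom2 f" and x: "x \<in> dom2" and \<theta>: "\<theta> \<in> {0..1}" "\<theta>' \<in> {0..1}"
  shows "\<bar>I \<theta> f x - I \<theta>' f x\<bar> \<le> L * sqrt (var_rate d \<kappa> / real N1) * \<bar>\<theta> - \<theta>'\<bar>"
proof -
  have B: "markov_op dom2 (bernstein2 N1 N2)" by (rule markov_op_bernstein2)
  have L: "0 \<le> L" using f by (rule lipschitz_on_nonneg)
  let ?p = "\<lambda>\<theta> v. (1 - \<theta>) *\<^sub>R x + \<theta> *\<^sub>R A v"
  have "\<bar>I \<theta> f x - I \<theta>' f x\<bar> = \<bar>bernstein2 N1 N2 (\<lambda>v. f (?p \<theta> v) - f (?p \<theta>' v)) x\<bar>"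
    by (simp add: interp_op_eq_bernstein2 markov_op_diff[OF B])
  also have "\<dots> \<le> bernstein2 N1 N2 (\<lambda>v. \<bar>f (?p \<theta> v) - f (?p \<theta>' v)\<bar>) x"
    by (rule markov_op_abs_le[OF B x])
  also have "\<dots> \<le> bernstein2 N1 N2 (\<lambda>v. L * \<bar>\<theta> - \<theta>'\<bar> * dist (A v) x) x"
  proof (rule markov_op_mono[OF B _ x])
    fix v assume "v \<in> dom2"
    then have "dist (f (?p \<theta> v)) (f (?p \<theta>' v)) \<le> L * dist (?p \<theta> v) (?p \<theta>' v)"
      using x \<theta> by (intro lipschitz_onD[OF f] interp_point_dom2)
    then show "\<bar>f (?p \<theta> v) - f (?p \<theta>' v)\<bar> \<le> L * \<bar>\<theta> - \<theta>'\<bar> * dist (A v) x"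
      by (simp add: dist_real_def dist_convex_comb_param mult.assoc)
  qed
  also have "\<dots> = L * \<bar>\<theta> - \<theta>'\<bar> * S (\<lambda>z. dist z x) x"
    by (simp add: markov_op_scale[OF B] step_op_eq comp_def)
  also have "\<dots> \<le> L * \<bar>\<theta> - \<theta>'\<bar> * sqrt (var_rate d \<kappa> / real N1)"
    using S_first_moment[OF x] L by (intro mult_left_mono) auto
  finally show ?thesis by (simp add: algebra_simps)
qed

text \<open>Write \<open>I \<theta> g x - I \<theta> g y\<close> as a change of the base point \<open>x\<close> inside the average, which
  costs \<open>(1 - \<theta>) K wdist x y\<close>, plus a change of the Bernstein weights, which costs
  \<open>\<theta> K wdist x y\<close> because the averaged function is \<open>\<theta> K\<close>-Lipschitz.\<close>
lemma weighted_lipschitz_interp_op: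
  assumes g: "weighted_lipschitz d K g" and \<theta>: "\<theta> \<in> {0..1}"
  shows "weighted_lipschitz d K (I \<theta> g)"
proof (rule weighted_lipschitzI)
  have B: "markov_op dom2 (bernstein2 N1 N2)" by (rule markov_op_bernstein2)
  show K: "0 \<le> K" using g by (rule weighted_lipschitz_nonneg)
  fix x y assume x: "x \<in> dom2" and y: "y \<in> dom2"
  define h where "h z v = g ((1 - \<theta>) *\<^sub>R z + \<theta> *\<^sub>R A v)" for z v
  have h: "\<bar>h z v - h z' v'\<bar> \<le> K * ((1 - \<theta>) * wdist d z z' + \<theta> * wdist d v v')"
    if "z \<in> dom2" "z' \<in> dom2" "v \<in> dom2" "v' \<in> dom2" for z z' v v'
    unfolding h_def using that \<theta> K
    by (intro order_trans[OF weighted_lipschitzD[OF g] mult_left_mono[OF wdist_interp_point_le]] interp_point_dom2)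
  have "\<bar>bernstein2 N1 N2 (h x) x - bernstein2 N1 N2 (h y) x\<bar> \<le> bernstein2 N1 N2 (\<lambda>v. \<bar>h x v - h y v\<bar>) x"
    using markov_op_abs_le[OF B x, of "\<lambda>v. h x v - h y v"] by (simp add: markov_op_diff[OF B])
  also have "\<dots> \<le> bernstein2 N1 N2 (\<lambda>v. K * (1 - \<theta>) * wdist d x y) x"
  proof (rule markov_op_mono[OF B _ x])
    fix v assume "v \<in> dom2"
    from h[OF x y this this] show "\<bar>h x v - h y v\<bar> \<le> K * (1 - \<theta>) * wdist d x y"
      by (simp add: wdist_def mult.assoc)
  qed
  finally have base: "\<bar>bernstein2 N1 N2 (h x) x - bernstein2 N1 N2 (h y) x\<bar> \<le> K * (1 - \<theta>) * wdist d x y"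
    by (simp add: markov_op_const[OF B])
  have "weighted_lipschitz d (\<theta> * K) (h y)"
  proof (rule weighted_lipschitzI)
    show "0 \<le> \<theta> * K" using \<theta> K by simp
    fix v v' assume "v \<in> dom2" "v' \<in> dom2"
    from h[OF y y this] show "\<bar>h y v - h y v'\<bar> \<le> \<theta> * K * wdist d v v'"
      by (simp add: wdist_def algebra_simps)
  qed
  then have weights: "\<bar>bernstein2 N1 N2 (h y) x - bernstein2 N1 N2 (h y) y\<bar> \<le> \<theta> * K * wdist d x y"
    using d_pos N1_pos N2_pos x y by (intro weighted_lipschitzD[OF weighted_lipschitz_bernstein2]) auto
  have "I \<theta> g x = bernstein2 N1 N2 (h x) x" "I \<theta> g y = bernstein2 N1 N2 (h y) y"
    by (simp_all add: interp_op_eq_bernstein2 h_def[abs_def])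
  then show "\<bar>I \<theta> g x - I \<theta> g y\<bar> \<le> K * wdist d x y"
    using base weights by (simp add: algebra_simps)
qed

lemma uN_eq: "uN d \<kappa> N1 N2 f t = (S ^^ nat \<lfloor>t * real N1\<rfloor>) (I (t * real N1 - real (nat \<lfloor>t * real N1\<rfloor>)) f)"
  by (rule ext) (simp add: uN_def Let_def)

lemma uN_lipschitz:
  assumes f: "L-lipschitz_on dom2 f" and t: "0 \<le> t"
  shows "(L / d * (1 + d))-lipschitz_on dom2 (uN d \<kappa> N1 N2 f t)"
proof -
  have "t * real N1 - real (nat \<lfloor>t * real N1\<rfloor>) \<in> {0..1}"
    using nat_floor_frac_bounds[of "t * real N1"] t by simp
  then show ?thesis
    unfolding uN_eq using d_pos d_le_1
    by (intro weighted_lipschitz_imp_lipschitz weighted_lipschitz_S_funpow weighted_lipschitz_interp_op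
        lipschitz_imp_weighted_lipschitz[OF f]) auto
qed

lemma S_funpow_interp_op_lipschitz_param:
  assumes f: "L-lipschitz_on dom2 f" and x: "x \<in> dom2" and \<theta>: "\<theta> \<in> {0..1}" "\<theta>' \<in> {0..1}"
  shows "\<bar>(S ^^ n) (I \<theta> f) x - (S ^^ n) (I \<theta>' f) x\<bar> \<le> L * sqrt (var_rate d \<kappa> / real N1) * \<bar>\<theta> - \<theta>'\<bar>"
proof -
  have P: "markov_op dom2 (S ^^ n)" by (rule markov_op_funpow[OF markov_op_S])
  have "\<bar>(S ^^ n) (I \<theta> f) x - (S ^^ n) (I \<theta>' f) x\<bar> \<le> (S ^^ n) (\<lambda>z. \<bar>I \<theta> f z - I \<theta>' f z\<bar>) x"
    using markov_op_abs_le[OF P x, of "\<lambda>z. I \<theta> f z - I \<theta>' f z"] by (simp add: markov_op_diff[OF P])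
  also have "\<dots> \<le> (S ^^ n) (\<lambda>z. L * sqrt (var_rate d \<kappa> / real N1) * \<bar>\<theta> - \<theta>'\<bar>) x"
    using interp_op_lipschitz_param[OF f _ \<theta>] by (intro markov_op_mono[OF P _ x])
  finally show ?thesis by (simp add: markov_op_const[OF P])
qed

lemma S_funpow_time_increment:
  assumes f: "L-lipschitz_on dom2 f" and x: "x \<in> dom2"
  shows "\<bar>(S ^^ (n + m)) f x - (S ^^ n) f x\<bar> \<le> L / d * (1 + d) * sqrt (var_rate d \<kappa> / real N1) * sqrt (real m)"
proof -
  have lip: "(L / d * (1 + d))-lipschitz_on dom2 ((S ^^ n) f)"
    using d_pos d_le_1
    by (intro weighted_lipschitz_imp_lipschitz weighted_lipschitz_S_funpow lipschitz_imp_weighted_lipschitz[OF f]) auto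
  have "(S ^^ (n + m)) f = (S ^^ m) ((S ^^ n) f)"
    by (metis funpow_add add.commute comp_apply)
  then show ?thesis
    using S_funpow_lipschitz_deviation[OF lip x, of m] by simp
qed

lemma uN_sqrt_modulus_time:
  assumes f: "L-lipschitz_on dom2 f" and x: "x \<in> dom2" and st: "0 \<le> s" "0 \<le> t"
  shows "\<bar>uN d \<kappa> N1 N2 f t x - uN d \<kappa> N1 N2 f s x\<bar>
    \<le> (2 * L + L / d * (1 + d)) * sqrt (var_rate d \<kappa>) * sqrt \<bar>t - s\<bar>"
proof -
  define \<sigma> where "\<sigma> = sqrt (var_rate d \<kappa> / real N1)"
  define V where "V n \<theta> = (S ^^ n) (I \<theta> f) x" for n \<theta>
  have "\<bar>uN d \<kappa> N1 N2 f t x - uN d \<kappa> N1 N2 f s x\<bar>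
      = \<bar>V (nat \<lfloor>t * real N1\<rfloor>) (t * real N1 - real (nat \<lfloor>t * real N1\<rfloor>))
        - V (nat \<lfloor>s * real N1\<rfloor>) (s * real N1 - real (nat \<lfloor>s * real N1\<rfloor>))\<bar>"
    by (simp add: uN_eq V_def)
  also have "\<dots> \<le> (2 * (L * \<sigma>) + L / d * (1 + d) * \<sigma>) * sqrt \<bar>t * real N1 - s * real N1\<bar>"
  proof (rule interpolation_sqrt_modulus)
    show "V n 1 = V (Suc n) 0" for n
      by (simp add: V_def interp_op_0 interp_op_1 funpow_swap1)
    show "\<bar>V n \<theta> - V n \<theta>'\<bar> \<le> L * \<sigma> * \<bar>\<theta> - \<theta>'\<bar>" if "\<theta> \<in> {0..1}" "\<theta>' \<in> {0..1}" for n \<theta> \<theta>'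
      unfolding V_def \<sigma>_def by (rule S_funpow_interp_op_lipschitz_param[OF f x that])
    show "\<bar>V (n + m) 0 - V n 0\<bar> \<le> L / d * (1 + d) * \<sigma> * sqrt (real m)" for n m
      unfolding V_def \<sigma>_def interp_op_0 by (rule S_funpow_time_increment[OF f x])
  qed (use st in simp_all)
  also have "\<dots> = (2 * L + L / d * (1 + d)) * (\<sigma> * sqrt \<bar>t * real N1 - s * real N1\<bar>)"
    by (simp add: algebra_simps)
  also have "\<sigma> * sqrt \<bar>t * real N1 - s * real N1\<bar> = sqrt (var_rate d \<kappa>) * sqrt \<bar>t - s\<bar>"
    using N1_pos by (simp add: \<sigma>_def left_diff_distrib[symmetric] abs_mult real_sqrt_mult real_sqrt_divide)
  finally show ?thesis
    by (simp only: mult.assoc)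
qed

end

theorem lemma3:
  fixes d \<kappa> T L :: real
  assumes "0 < d" "d \<le> 1" "0 < \<kappa>" "0 < T"
  shows "\<exists>C. \<forall>(N1::nat) (N2::nat) (f :: real \<times> real \<Rightarrow> real) x y s t.
           0 < N1 \<and> real N2 = d * real N1 \<and> \<kappa> / real N1 \<le> 1 \<and>
           L-lipschitz_on dom2 f \<and> f (0, 0) = 0 \<and> f (1, 1) = 0 \<and>
           x \<in> dom2 \<and> y \<in> dom2 \<and> s \<in> {0..T} \<and> t \<in> {0..T} \<longrightarrow>
             \<bar>uN d \<kappa> N1 N2 f t x - uN d \<kappa> N1 N2 f t y\<bar> \<le> C * dist x y \<and>
             \<bar>uN d \<kappa> N1 N2 f t x - uN d \<kappa> N1 N2 f s x\<bar> \<le> C * sqrt \<bar>t - s\<bar>"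
proof -
  define C\<^sub>x C\<^sub>t where "C\<^sub>x = L / d * (1 + d)" and "C\<^sub>t = (2 * L + L / d * (1 + d)) * sqrt (var_rate d \<kappa>)"
  show ?thesis
  proof (intro exI[of _ "C\<^sub>x + C\<^sub>t"] allI impI)
    fix N1 N2 :: nat and f :: "real \<times> real \<Rightarrow> real" and x y :: "real \<times> real" and s t :: real
    assume H: "0 < N1 \<and> real N2 = d * real N1 \<and> \<kappa> / real N1 \<le> 1 \<and>
      L-lipschitz_on dom2 f \<and> f (0, 0) = 0 \<and> f (1, 1) = 0 \<and>
      x \<in> dom2 \<and> y \<in> dom2 \<and> s \<in> {0..T} \<and> t \<in> {0..T}"
    interpret two_patch_chain d \<kappa> N1 N2
      using H assms by unfold_locales auto
    have f: "L-lipschitz_on dom2 f" and x: "x \<in> dom2" and y: "y \<in> dom2" and st: "0 \<le> s" "0 \<le> t"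
      using H by auto
    have "0 \<le> C\<^sub>x" "0 \<le> C\<^sub>t"
      using lipschitz_on_nonneg[OF f] assms by (simp_all add: C\<^sub>x_def C\<^sub>t_def var_rate_def)
    moreover have "\<bar>uN d \<kappa> N1 N2 f t x - uN d \<kappa> N1 N2 f t y\<bar> \<le> C\<^sub>x * dist x y"
      using lipschitz_onD[OF uN_lipschitz[OF f st(2)] x y] by (simp add: C\<^sub>x_def dist_real_def)
    moreover have "\<bar>uN d \<kappa> N1 N2 f t x - uN d \<kappa> N1 N2 f s x\<bar> \<le> C\<^sub>t * sqrt \<bar>t - s\<bar>"
      using uN_sqrt_modulus_time[OF f x st] by (simp add: C\<^sub>t_def)
    ultimately show "\<bar>uN d \<kappa> N1 N2 f t x - uN d \<kappa> N1 N2 f t y\<bar> \<le> (C\<^sub>x + C\<^sub>t) * dist x y \<and>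
      \<bar>uN d \<kappa> N1 N2 f t x - uN d \<kappa> N1 N2 f s x\<bar> \<le> (C\<^sub>x + C\<^sub>t) * sqrt \<bar>t - s\<bar>"
      by (smt (verit) mult_right_mono real_sqrt_ge_zero zero_le_dist abs_ge_zero)
  qed
qed

end
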